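(* Let $G$, $H$ be graphs with $n=|V(G)|$, $n'=|V(H)|$, $m=|E(G)|$, $m'=|E(H)|$, and let $k_V$, $k_E$ be vertex and edge kernels whose single evaluation takes time $\mathsf{T}_V$ and $\mathsf{T}_E$, respectively. Consider the following algorithm: for all $v\in V(G)$, $v'\in V(H)$, compute $w\gets k_V(v,v')$ and, if $w>0$, create a vertex $(v,v')$ of weight $w$; then, fixing an arbitrary total order $\prec$ on the created vertices, for every created vertex $(u,s)$ and all $v\in N(u)$, $t\in N(s)$ such that $(v,t)$ is a created vertex and $(u,s)\prec(v,t)$, compute $w\gets k_E(uv,st)$ and, if $w>0$, create the edge $(u,s)(v,t)$ of weight $w$. This algorithm computes the weighted direct product graph $G\times_w H$ in time $O(nn'\mathsf{T}_V+mm'\mathsf{T}_E)$.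
   Context: Graphs are finite and undirected; $N(v)$ denotes the neighborhood of $v$. The weighted direct product graph $G\times_w H=(\mathcal V,\mathcal E,w)$ is defined by $\mathcal V=\{(v,v')\in V(G)\times V(H): k_V(v,v')>0\}$, $\mathcal E=\{(u,u')(v,v'): (u,u'),(v,v')\in\mathcal V,\ uv\in E(G),\ u'v'\in E(H),\ k_E(uv,u'v')>0\}$, with weights $w((u,u'))=k_V(u,u')$ and $w((u,u')(v,v'))=k_E(uv,u'v')$. *)

theory Defs
  imports Complex_Main
begin

text \<open>A finite undirected simple graph: a finite vertex set and a set of edges,
  each edge being a 2-element subset of the vertex set (edge uv is the set {u,v}).\<close>
definition simple_graph :: "'a set \<Rightarrow> 'a set set \<Rightarrow> bool" where
  "simple_graph V E \<longleftrightarrow> finite V \<and> (\<forall>e\<in>E. e \<subseteq> V \<and> card e = 2)"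

definition nbhd :: "'a set set \<Rightarrow> 'a \<Rightarrow> 'a set" where
  "nbhd E u = {v. {u, v} \<in> E}"

definition adj_lists :: "'a set \<Rightarrow> 'a set set \<Rightarrow> ('a \<Rightarrow> 'a list) \<Rightarrow> bool" where
  "adj_lists V E NL \<longleftrightarrow> (\<forall>u\<in>V. distinct (NL u) \<and> set (NL u) = nbhd E u)"

definition dp_vertices :: "'a set \<Rightarrow> 'b set \<Rightarrow> ('a \<Rightarrow> 'b \<Rightarrow> real) \<Rightarrow> ('a \<times> 'b) set" where
  "dp_vertices VG VH kV = {(v, v'). v \<in> VG \<and> v' \<in> VH \<and> kV v v' > 0}"

definition dp_edges ::
  "'a set \<Rightarrow> 'a set set \<Rightarrow> 'b set \<Rightarrow> 'b set set \<Rightarrow> ('a \<Rightarrow> 'b \<Rightarrow> real)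
   \<Rightarrow> ('a set \<Rightarrow> 'b set \<Rightarrow> real) \<Rightarrow> ('a \<times> 'b) set set" where
  "dp_edges VG EG VH EH kV kE =
     {{(u, u'), (v, v')} | u u' v v'.
        (u, u') \<in> dp_vertices VG VH kV \<and> (v, v') \<in> dp_vertices VG VH kV \<and>
        {u, v} \<in> EG \<and> {u', v'} \<in> EH \<and> kE {u, v} {u', v'} > 0}"

text \<open>w((u,u')) = kV(u,u') and w((u,u')(v,v')) = kE(uv,u'v'); note that for
  e = {(u,u'),(v,v')} we have fst ` e = {u,v} = uv and snd ` e = {u',v'} = u'v'.\<close>
definition dp_vweight :: "('a \<Rightarrow> 'b \<Rightarrow> real) \<Rightarrow> 'a \<times> 'b \<Rightarrow> real" where
  "dp_vweight kV p = kV (fst p) (snd p)"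

definition dp_eweight :: "('a set \<Rightarrow> 'b set \<Rightarrow> real) \<Rightarrow> ('a \<times> 'b) set \<Rightarrow> real" where
  "dp_eweight kE e = kE (fst ` e) (snd ` e)"

definition represents_dp ::
  "'a set \<Rightarrow> 'a set set \<Rightarrow> 'b set \<Rightarrow> 'b set set \<Rightarrow> ('a \<Rightarrow> 'b \<Rightarrow> real)
   \<Rightarrow> ('a set \<Rightarrow> 'b set \<Rightarrow> real)
   \<Rightarrow> (('a \<times> 'b) \<times> real) list \<Rightarrow> (('a \<times> 'b) \<times> ('a \<times> 'b) \<times> real) list \<Rightarrow> bool" where
  "represents_dp VG EG VH EH kV kE vs es \<longleftrightarrow>
     distinct (map fst vs) \<and> set (map fst vs) = dp_vertices VG VH kV \<and>
     (\<forall>(p, w) \<in> set vs. w = dp_vweight kV p) \<and>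
     distinct (map (\<lambda>(p, q, w). {p, q}) es) \<and>
     set (map (\<lambda>(p, q, w). {p, q}) es) = dp_edges VG EG VH EH kV kE \<and>
     (\<forall>(p, q, w) \<in> set es. w = dp_eweight kE {p, q})"

text \<open>Cost model: one evaluation of kV costs TV, one evaluation of kE costs TE; every other
  elementary step (a loop iteration, a membership test of a candidate vertex among the created
  vertices, a comparison with respect to the order, creating a vertex/edge) costs 1.\<close>

definition vstep :: "('a \<Rightarrow> 'b \<Rightarrow> real) \<Rightarrow> real
    \<Rightarrow> (('a \<times> 'b) \<times> real) list \<times> real \<Rightarrow> 'a \<times> 'b \<Rightarrow> (('a \<times> 'b) \<times> real) list \<times> real" where
  "vstep kV TV st p =
     (let (vs, c) = st; w = kV (fst p) (snd p)
      in if 0 < w then (vs @ [(p, w)], c + TV + 2) else (vs, c + TV + 1))"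

definition vertex_phase :: "('a \<Rightarrow> 'b \<Rightarrow> real) \<Rightarrow> real \<Rightarrow> 'a list \<Rightarrow> 'b list
    \<Rightarrow> (('a \<times> 'b) \<times> real) list \<times> real" where
  "vertex_phase kV TV xs ys = foldl (vstep kV TV) ([], 0) (List.product xs ys)"

definition estep :: "('a set \<Rightarrow> 'b set \<Rightarrow> real) \<Rightarrow> real \<Rightarrow> ('a \<times> 'b) rel
    \<Rightarrow> ('a \<times> 'b) list \<Rightarrow> 'a \<times> 'b
    \<Rightarrow> (('a \<times> 'b) \<times> ('a \<times> 'b) \<times> real) list \<times> real \<Rightarrow> 'a \<times> 'b
    \<Rightarrow> (('a \<times> 'b) \<times> ('a \<times> 'b) \<times> real) list \<times> real" where
  "estep kE TE prec cv us st vt =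
     (let (es, c) = st
      in if vt \<in> set cv \<and> (us, vt) \<in> prec then
           (let w = kE {fst us, fst vt} {snd us, snd vt}
            in if 0 < w then (es @ [(us, vt, w)], c + TE + 3) else (es, c + TE + 2))
         else (es, c + 2))"

definition edge_phase :: "('a set \<Rightarrow> 'b set \<Rightarrow> real) \<Rightarrow> real
    \<Rightarrow> ('a \<Rightarrow> 'a list) \<Rightarrow> ('b \<Rightarrow> 'b list) \<Rightarrow> ('a \<times> 'b) rel \<Rightarrow> ('a \<times> 'b) list
    \<Rightarrow> (('a \<times> 'b) \<times> ('a \<times> 'b) \<times> real) list \<times> real" where
  "edge_phase kE TE NG NH prec cv =
     foldl (\<lambda>st us. let (es, c) = st in
              foldl (estep kE TE prec cv us) (es, c + 1)
                    (List.product (NG (fst us)) (NH (snd us))))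
           ([], 0) cv"

definition dp_algorithm :: "('a \<Rightarrow> 'b \<Rightarrow> real) \<Rightarrow> ('a set \<Rightarrow> 'b set \<Rightarrow> real) \<Rightarrow> real \<Rightarrow> real
    \<Rightarrow> 'a list \<Rightarrow> 'b list \<Rightarrow> ('a \<Rightarrow> 'a list) \<Rightarrow> ('b \<Rightarrow> 'b list) \<Rightarrow> ('a \<times> 'b) rel
    \<Rightarrow> (('a \<times> 'b) \<times> real) list \<times> (('a \<times> 'b) \<times> ('a \<times> 'b) \<times> real) list \<times> real" where
  "dp_algorithm kV kE TV TE xs ys NG NH prec =
     (let (vs, c1) = vertex_phase kV TV xs ys;
          (es, c2) = edge_phase kE TE NG NH prec (map fst vs)
      in (vs, es, c1 + c2))"

end

theory Submission
  imports Defs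
begin

text \<open>The vertex loop evaluates \<open>k\<^sub>V\<close> once per pair of vertices. The edge loop visits, for each
  created vertex \<open>(u, s)\<close>, the \<open>deg u \<cdot> deg s\<close> candidates \<open>N(u) \<times> N(s)\<close>; summed over all pairs
  this is \<open>(\<Sum>deg)(\<Sum>deg') = 4mm'\<close> steps by the handshake lemma. Correctness of the edge list rests on
  the order \<open>\<prec>\<close>: every product edge has exactly one \<open>\<prec>\<close>-increasing orientation, and it is
  created precisely when the loop reaches that orientation.\<close>

definition vstep_cost :: "('a \<Rightarrow> 'b \<Rightarrow> real) \<Rightarrow> real \<Rightarrow> 'a \<times> 'b \<Rightarrow> real" where
  "vstep_cost kV TV p = (if 0 < kV (fst p) (snd p) then TV + 2 else TV + 1)"

definition estep_cost :: "('a set \<Rightarrow> 'b set \<Rightarrow> real) \<Rightarrow> real \<Rightarrow> ('a \<times> 'b) rel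
    \<Rightarrow> ('a \<times> 'b) list \<Rightarrow> 'a \<times> 'b \<Rightarrow> 'a \<times> 'b \<Rightarrow> real" where
  "estep_cost kE TE prec cv us vt =
     (if vt \<in> set cv \<and> (us, vt) \<in> prec then
        if 0 < kE {fst us, fst vt} {snd us, snd vt} then TE + 3 else TE + 2
      else 2)"

definition creates_edge :: "('a set \<Rightarrow> 'b set \<Rightarrow> real) \<Rightarrow> ('a \<times> 'b) rel
    \<Rightarrow> ('a \<times> 'b) list \<Rightarrow> 'a \<times> 'b \<Rightarrow> 'a \<times> 'b \<Rightarrow> bool" where
  "creates_edge kE prec cv us vt \<longleftrightarrow>
     vt \<in> set cv \<and> (us, vt) \<in> prec \<and> 0 < kE {fst us, fst vt} {snd us, snd vt}"

abbreviation candidates :: "('a \<Rightarrow> 'a list) \<Rightarrow> ('b \<Rightarrow> 'b list) \<Rightarrow> 'a \<times> 'b \<Rightarrow> ('a \<times> 'b) list" where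
  "candidates NG NH us \<equiv> List.product (NG (fst us)) (NH (snd us))"

definition created_arcs :: "('a set \<Rightarrow> 'b set \<Rightarrow> real) \<Rightarrow> ('a \<Rightarrow> 'a list) \<Rightarrow> ('b \<Rightarrow> 'b list)
    \<Rightarrow> ('a \<times> 'b) rel \<Rightarrow> ('a \<times> 'b) list \<Rightarrow> (('a \<times> 'b) \<times> ('a \<times> 'b)) list" where
  "created_arcs kE NG NH prec cv =
     concat (map (\<lambda>us. map (Pair us) (filter (creates_edge kE prec cv us) (candidates NG NH us))) cv)"

lemma foldl_vstep:
  "foldl (vstep kV TV) (vs0, c0) L =
     (vs0 @ map (\<lambda>p. (p, dp_vweight kV p)) (filter (\<lambda>p. 0 < dp_vweight kV p) L),
      c0 + (\<Sum>p\<leftarrow>L. vstep_cost kV TV p))"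
  by (induction L arbitrary: vs0 c0)
     (auto simp: vstep_def vstep_cost_def dp_vweight_def algebra_simps)

lemma vertex_phase_eq:
  "vertex_phase kV TV xs ys =
     (map (\<lambda>p. (p, dp_vweight kV p)) (filter (\<lambda>p. 0 < dp_vweight kV p) (List.product xs ys)),
      \<Sum>p\<leftarrow>List.product xs ys. vstep_cost kV TV p)"
  by (simp add: vertex_phase_def foldl_vstep)

lemma foldl_estep:
  "foldl (estep kE TE prec cv us) (es0, c0) L =
     (es0 @ map (\<lambda>vt. (us, vt, kE {fst us, fst vt} {snd us, snd vt}))
               (filter (creates_edge kE prec cv us) L),
      c0 + (\<Sum>vt\<leftarrow>L. estep_cost kE TE prec cv us vt))"
  by (induction L arbitrary: es0 c0)
     (auto simp: estep_def estep_cost_def creates_edge_def algebra_simps Let_def)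

lemma edge_phase_eq:
  "edge_phase kE TE NG NH prec cv =
     (map (\<lambda>(p, q). (p, q, dp_eweight kE {p, q})) (created_arcs kE NG NH prec cv),
      \<Sum>us\<leftarrow>cv. 1 + (\<Sum>vt\<leftarrow>candidates NG NH us. estep_cost kE TE prec cv us vt))"
proof -
  have "foldl (\<lambda>st us. let (es, c) = st in
            foldl (estep kE TE prec cv us) (es, c + 1) (candidates NG NH us)) (es0, c0) U =
        (es0 @ map (\<lambda>(p, q). (p, q, dp_eweight kE {p, q}))
           (concat (map (\<lambda>us. map (Pair us) (filter (creates_edge kE prec cv us)
              (candidates NG NH us))) U)),
         c0 + (\<Sum>us\<leftarrow>U. 1 + (\<Sum>vt\<leftarrow>candidates NG NH us. estep_cost kE TE prec cv us vt)))"
    for es0 c0 U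
    by (induction U arbitrary: es0 c0) (simp_all add: foldl_estep dp_eweight_def comp_def add.assoc)
  from this[of "[]" 0 cv] show ?thesis
    unfolding edge_phase_def created_arcs_def by simp
qed

lemma inj_on_doubleton_if_antisym:
  assumes "\<And>p q. (p, q) \<in> A \<Longrightarrow> (q, p) \<in> A \<Longrightarrow> p = q"
  shows "inj_on (\<lambda>(p, q). {p, q}) A"
  using assms by (auto simp: inj_on_def doubleton_eq_iff)

definition dp_arcs ::
  "'a set \<Rightarrow> 'a set set \<Rightarrow> 'b set \<Rightarrow> 'b set set \<Rightarrow> ('a \<Rightarrow> 'b \<Rightarrow> real)
   \<Rightarrow> ('a set \<Rightarrow> 'b set \<Rightarrow> real) \<Rightarrow> ('a \<times> 'b) rel \<Rightarrow> ('a \<times> 'b) rel" where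
  "dp_arcs VG EG VH EH kV kE prec =
     {(p, q). p \<in> dp_vertices VG VH kV \<and> q \<in> dp_vertices VG VH kV \<and> (p, q) \<in> prec \<and>
        {fst p, fst q} \<in> EG \<and> {snd p, snd q} \<in> EH \<and> 0 < kE {fst p, fst q} {snd p, snd q}}"

lemma inj_on_doubleton_dp_arcs:
  assumes "strict_linear_order_on (dp_vertices VG VH kV) prec"
  shows "inj_on (\<lambda>(p, q). {p, q}) (dp_arcs VG EG VH EH kV kE prec)"
proof (rule inj_on_doubleton_if_antisym)
  fix p q assume "(p, q) \<in> dp_arcs VG EG VH EH kV kE prec" "(q, p) \<in> dp_arcs VG EG VH EH kV kE prec"
  then have "(p, p) \<in> prec" "p \<in> dp_vertices VG VH kV"
    using assms unfolding dp_arcs_def strict_linear_order_on_def by (auto dest: transD)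
  then show "p = q"
    using assms unfolding strict_linear_order_on_def irrefl_on_def by blast
qed

lemma dp_edges_eq_image_dp_arcs:
  assumes "simple_graph VG EG" and "strict_linear_order_on (dp_vertices VG VH kV) prec"
  shows "dp_edges VG EG VH EH kV kE = (\<lambda>(p, q). {p, q}) ` dp_arcs VG EG VH EH kV kE prec"
proof
  show "(\<lambda>(p, q). {p, q}) ` dp_arcs VG EG VH EH kV kE prec \<subseteq> dp_edges VG EG VH EH kV kE"
    unfolding dp_arcs_def dp_edges_def by force
next
  show "dp_edges VG EG VH EH kV kE \<subseteq> (\<lambda>(p, q). {p, q}) ` dp_arcs VG EG VH EH kV kE prec"
  proof
    fix e assume "e \<in> dp_edges VG EG VH EH kV kE"
    then obtain u u' v v' where e: "e = {(u, u'), (v, v')}"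
      and V: "(u, u') \<in> dp_vertices VG VH kV" "(v, v') \<in> dp_vertices VG VH kV"
      and E: "{u, v} \<in> EG" "{u', v'} \<in> EH" "0 < kE {u, v} {u', v'}"
      unfolding dp_edges_def by blast
    have "card {u, v} = 2" using E(1) assms(1) unfolding simple_graph_def by blast
    then have "(u, u') \<noteq> (v, v')" by auto
    then have "((u, u'), (v, v')) \<in> prec \<or> ((v, v'), (u, u')) \<in> prec"
      using assms(2) V unfolding strict_linear_order_on_def total_on_def by blast
    then have "((u, u'), (v, v')) \<in> dp_arcs VG EG VH EH kV kE prec
        \<or> ((v, v'), (u, u')) \<in> dp_arcs VG EG VH EH kV kE prec"
      using V E unfolding dp_arcs_def by (auto simp: insert_commute)
    then show "e \<in> (\<lambda>(p, q). {p, q}) ` dp_arcs VG EG VH EH kV kE prec"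
      unfolding e by (auto simp: insert_commute intro: rev_image_eqI)
  qed
qed

lemma vertex_phase_represents:
  assumes "distinct xs" "set xs = VG" "distinct ys" "set ys = VH"
    and "vertex_phase kV TV xs ys = (vs, c)"
  shows "distinct (map fst vs)" "set (map fst vs) = dp_vertices VG VH kV"
    "\<forall>(p, w) \<in> set vs. w = dp_vweight kV p"
  using assms(1-4) assms(5)[symmetric]
  by (auto simp: vertex_phase_eq comp_def distinct_product dp_vertices_def dp_vweight_def)

lemma set_created_arcs:
  assumes "adj_lists VG EG NG" "adj_lists VH EH NH" "set cv = dp_vertices VG VH kV"
  shows "set (created_arcs kE NG NH prec cv) = dp_arcs VG EG VH EH kV kE prec"
  using assms unfolding created_arcs_def dp_arcs_def adj_lists_def creates_edge_def
    nbhd_def dp_vertices_def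
  by (auto simp: insert_commute)

lemma distinct_concat_map_Pair:
  "distinct xs \<Longrightarrow> (\<And>x. x \<in> set xs \<Longrightarrow> distinct (f x))
    \<Longrightarrow> distinct (concat (map (\<lambda>x. map (Pair x) (f x)) xs))"
  by (induction xs) (auto simp: distinct_map inj_on_def)

lemma distinct_created_arcs:
  assumes "adj_lists VG EG NG" "adj_lists VH EH NH" "distinct cv" "set cv = dp_vertices VG VH kV"
  shows "distinct (created_arcs kE NG NH prec cv)"
  unfolding created_arcs_def
proof (rule distinct_concat_map_Pair[OF \<open>distinct cv\<close>])
  fix us assume "us \<in> set cv"
  then show "distinct (filter (creates_edge kE prec cv us) (candidates NG NH us))"
    using assms(1,2,4) unfolding adj_lists_def dp_vertices_def by (auto simp: distinct_product)
qed

lemma edge_phase_represents: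
  assumes "simple_graph VG EG" "adj_lists VG EG NG" "adj_lists VH EH NH"
    and "distinct cv" "set cv = dp_vertices VG VH kV"
    and "strict_linear_order_on (dp_vertices VG VH kV) prec"
    and "edge_phase kE TE NG NH prec cv = (es, c)"
  shows "distinct (map (\<lambda>(p, q, w). {p, q}) es)"
    "set (map (\<lambda>(p, q, w). {p, q}) es) = dp_edges VG EG VH EH kV kE"
    "\<forall>(p, q, w) \<in> set es. w = dp_eweight kE {p, q}"
proof -
  have es: "map (\<lambda>(p, q, w). {p, q}) es = map (\<lambda>(p, q). {p, q}) (created_arcs kE NG NH prec cv)"
    using assms(7)[symmetric] by (simp add: edge_phase_eq comp_def case_prod_beta)
  show "distinct (map (\<lambda>(p, q, w). {p, q}) es)"
    unfolding es distinct_map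
    using distinct_created_arcs[OF assms(2-5)] inj_on_doubleton_dp_arcs[OF assms(6)]
      set_created_arcs[OF assms(2,3,5)] by simp
  show "set (map (\<lambda>(p, q, w). {p, q}) es) = dp_edges VG EG VH EH kV kE"
    unfolding es using set_created_arcs[OF assms(2,3,5)] dp_edges_eq_image_dp_arcs[OF assms(1,6)]
    by simp
  show "\<forall>(p, q, w) \<in> set es. w = dp_eweight kE {p, q}"
    using assms(7)[symmetric] by (auto simp: edge_phase_eq)
qed

lemma sum_degree_le:
  assumes "simple_graph V E"
  shows "(\<Sum>u\<in>V. real (card (nbhd E u))) \<le> 4 * real (card E)"
proof -
  have fV: "finite V" and E: "\<And>e. e \<in> E \<Longrightarrow> e \<subseteq> V \<and> card e = 2"
    using assms unfolding simple_graph_def by auto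
  then have fE: "finite E" by (meson PowI finite_Pow_iff rev_finite_subset subsetI)
  have fN: "finite (nbhd E u)" if "u \<in> V" for u
    using fV E that by (auto simp: nbhd_def intro: rev_finite_subset)
  have "(\<Sum>u\<in>V. card (nbhd E u)) = card (Sigma V (nbhd E))"
    using fV fN by (simp add: card_SigmaI)
  also have "\<dots> \<le> card (\<Union>e\<in>E. e \<times> e)"
    using fV fE E by (intro card_mono) (auto simp: nbhd_def intro: rev_finite_subset)
  also have "\<dots> \<le> (\<Sum>e\<in>E. card (e \<times> e))" by (rule card_UN_le[OF fE])
  also have "\<dots> = 4 * card E"
    using E by (simp add: card_cartesian_product)
  finally show ?thesis by (simp flip: of_nat_sum)
qed

lemma vertex_phase_cost_le:
  assumes "distinct xs" "distinct ys"
  shows "snd (vertex_phase kV TV xs ys) \<le> real (length xs * length ys) * (TV + 2)"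
proof -
  have "(\<Sum>p\<leftarrow>List.product xs ys. vstep_cost kV TV p) \<le> (\<Sum>p\<leftarrow>List.product xs ys. TV + 2)"
    by (rule sum_list_mono) (simp add: vstep_cost_def)
  then show ?thesis by (simp add: vertex_phase_eq sum_list_triv)
qed

lemma edge_phase_cost_le:
  assumes "simple_graph VG EG" "simple_graph VH EH" "adj_lists VG EG NG" "adj_lists VH EH NH"
    and "distinct cv" "set cv \<subseteq> VG \<times> VH" and "0 \<le> TE"
  shows "snd (edge_phase kE TE NG NH prec cv)
    \<le> real (card VG * card VH) + 16 * real (card EG * card EH) * (TE + 3)"
proof -
  define deg where "deg = (\<lambda>us. real (card (nbhd EG (fst us))) * real (card (nbhd EH (snd us))))"
  have "(\<Sum>vt\<leftarrow>candidates NG NH us. estep_cost kE TE prec cv us vt) \<le> deg us * (TE + 3)"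
    if "us \<in> VG \<times> VH" for us
  proof -
    have "(\<Sum>vt\<leftarrow>candidates NG NH us. estep_cost kE TE prec cv us vt)
          \<le> (\<Sum>vt\<leftarrow>candidates NG NH us. TE + 3)"
      using \<open>0 \<le> TE\<close> by (intro sum_list_mono) (simp add: estep_cost_def)
    also have "\<dots> = deg us * (TE + 3)"
      using assms(3,4) that
      by (auto simp: sum_list_triv deg_def adj_lists_def distinct_card[symmetric])
    finally show ?thesis .
  qed
  then have "snd (edge_phase kE TE NG NH prec cv) \<le> (\<Sum>us\<leftarrow>cv. 1 + deg us * (TE + 3))"
    using assms(6) by (auto simp: edge_phase_eq intro!: sum_list_mono)
  also have "\<dots> = (\<Sum>us\<in>set cv. 1 + deg us * (TE + 3))"
    using \<open>distinct cv\<close> by (rule sum_list_distinct_conv_sum_set)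
  also have "\<dots> \<le> (\<Sum>us\<in>VG \<times> VH. 1 + deg us * (TE + 3))"
    using assms(1,2,6,7) unfolding simple_graph_def deg_def by (intro sum_mono2) auto
  also have "\<dots> = real (card VG * card VH) + (\<Sum>us\<in>VG \<times> VH. deg us) * (TE + 3)"
    by (simp add: sum.distrib card_cartesian_product flip: sum_distrib_right)
  also have "(\<Sum>us\<in>VG \<times> VH. deg us)
      = (\<Sum>u\<in>VG. real (card (nbhd EG u))) * (\<Sum>s\<in>VH. real (card (nbhd EH s)))"
    unfolding deg_def by (simp add: sum_product sum.cartesian_product split_def)
  also have "real (card VG * card VH) + \<dots> * (TE + 3)
      \<le> real (card VG * card VH) + (4 * real (card EG)) * (4 * real (card EH)) * (TE + 3)"
    using sum_degree_le[OF assms(1)] sum_degree_le[OF assms(2)] \<open>0 \<le> TE\<close>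
    by (intro add_left_mono mult_right_mono mult_mono) (auto intro: sum_nonneg)
  finally show ?thesis by simp
qed

theorem proposition8:
  "\<exists>C::real. \<forall>(VG::'a set) EG (VH::'b set) EH kV kE TV TE xs ys NG NH prec.
     simple_graph VG EG \<and> simple_graph VH EH \<and> 1 \<le> TV \<and> 1 \<le> TE \<and>
     distinct xs \<and> set xs = VG \<and> distinct ys \<and> set ys = VH \<and>
     adj_lists VG EG NG \<and> adj_lists VH EH NH \<and>
     strict_linear_order_on (dp_vertices VG VH kV) prec \<longrightarrow>
     (case dp_algorithm kV kE TV TE xs ys NG NH prec of (vs, es, c) \<Rightarrow>
        represents_dp VG EG VH EH kV kE vs es \<and>
        c \<le> C * (real (card VG * card VH) * TV + real (card EG * card EH) * TE))"
proof (intro exI[of _ 64] allI impI, elim conjE)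
  fix VG :: "'a set" and EG :: "'a set set" and VH :: "'b set" and EH :: "'b set set"
    and kV :: "'a \<Rightarrow> 'b \<Rightarrow> real" and kE :: "'a set \<Rightarrow> 'b set \<Rightarrow> real" and TV TE :: real
    and xs :: "'a list" and ys :: "'b list" and NG :: "'a \<Rightarrow> 'a list" and NH :: "'b \<Rightarrow> 'b list"
    and prec :: "('a \<times> 'b) rel"
  assume gG: "simple_graph VG EG" and gH: "simple_graph VH EH" and "1 \<le> TV" "1 \<le> TE"
    and xs: "distinct xs" "set xs = VG" and ys: "distinct ys" "set ys = VH"
    and aG: "adj_lists VG EG NG" and aH: "adj_lists VH EH NH"
    and prec: "strict_linear_order_on (dp_vertices VG VH kV) prec"
  obtain vs c1 where vp: "vertex_phase kV TV xs ys = (vs, c1)" by fastforce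
  obtain es c2 where ep: "edge_phase kE TE NG NH prec (map fst vs) = (es, c2)" by fastforce
  note V = vertex_phase_represents[OF xs ys vp]
  note E = edge_phase_represents[OF gG aG aH V(1,2) prec ep]
  define n where "n = real (card VG * card VH)"
  define m where "m = real (card EG * card EH)"
  have "c1 \<le> n * TV + 2 * n"
    using vertex_phase_cost_le[OF xs(1) ys(1), of kV TV] xs ys
    by (simp add: vp n_def distinct_card[symmetric] algebra_simps)
  moreover have "c2 \<le> n + 16 * (m * TE) + 48 * m"
    using edge_phase_cost_le[OF gG gH aG aH V(1), where kE = kE and prec = prec and TE = TE]
      V(2) \<open>1 \<le> TE\<close> by (auto simp: ep n_def m_def dp_vertices_def algebra_simps)
  moreover have "n \<le> n * TV" "m \<le> m * TE" "0 \<le> n" "0 \<le> m"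
    using mult_left_mono[OF \<open>1 \<le> TV\<close>, of n] mult_left_mono[OF \<open>1 \<le> TE\<close>, of m]
    by (simp_all add: n_def m_def)
  ultimately have "c1 + c2 \<le> 64 * (n * TV + m * TE)" unfolding distrib_left by linarith
  then show "case dp_algorithm kV kE TV TE xs ys NG NH prec of (vs, es, c) \<Rightarrow>
      represents_dp VG EG VH EH kV kE vs es \<and>
      c \<le> 64 * (real (card VG * card VH) * TV + real (card EG * card EH) * TE)"
    using V E by (simp add: dp_algorithm_def vp ep represents_dp_def n_def m_def)
qed

end
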